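(* Let $\{\mu_t\}$ be a free convolution semigroup, $s\le t$, and let $\mathcal K_{s,t}^\ast$ be the adjoint of $\mathcal K_{s,t}$ on $\mathcal M$, i.e. $\langle\mathcal K_{s,t}^\ast\nu,p\rangle=\langle\nu,\mathcal K_{s,t}p\rangle$. Then for every $\nu\in\mathcal M$, $G_{\mathcal K_{s,t}^\ast\nu}(z)=G_\nu(F_{s,t}(z))$. In particular, if $\{P_n(x,t)\}_{n\ge0}$ is a family of martingale polynomials for $\{\mu_t\}$ with $\deg P_n=n$, and $\{P_n^\ast(t)\}$ is the dual basis of $\mathcal M$ (i.e. $\langle P_n^\ast(t),P_k(\cdot,t)\rangle=\delta_{nk}$), then $G_{P_n^\ast(t)}(z)=G_{P_n^\ast(s)}(F_{s,t}(z))$.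
   Context: $\mathcal M$ is the space of linear functionals on $\mathbb C[x]$; for $\nu\in\mathcal M$, $G_\nu(z)=\sum_{n\ge0}\langle\nu,x^n\rangle z^{-(n+1)}$ (formal series in $z^{-1}$). $\mu$ is a freely infinitely divisible probability measure with all moments finite, $\{\mu_t\}$ its free convolution semigroup ($R_{\mu_t}=tR_\mu$, where $R_\nu=K_\nu-\frac1z$ and $K_\nu$ is the compositional inverse of $G_\nu$), $G_t=G_{\mu_t}$, $K_t=K_{\mu_t}$, $F_{s,t}=K_s\circ G_t$. $\mathcal K_{s,t}$ is the linear operator on $\mathbb C[x]$ determined coefficientwise by $\mathcal K_{s,t}(\mathrm{Res}_z)=\mathrm{Res}_{F_{s,t}(z)}$, $\mathrm{Res}_z(x)=\frac{1}{z-x}=\sum x^nz^{-(n+1)}$. A martingale polynomial is $p(x,t)$, polynomial in $x$, with $\mathcal K_{s,t}(p(\cdot,t))=p(\cdot,s)$ for $s<t$. *)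

theory Defs
  imports "HOL-Probability.Probability"
          "HOL-Computational_Algebra.Polynomial"
          "HOL-Computational_Algebra.Formal_Laurent_Series"
begin

(* All Cauchy-type transforms are formal series in z^{-1};
   we write w = z^{-1} and represent them as formal power / Laurent series in w.
   Elements of M (linear functionals on C[x]) are functions complex poly => complex
   satisfying lin_fun. *)

definition lin_fun :: "(complex poly \<Rightarrow> complex) \<Rightarrow> bool" where
  "lin_fun \<nu> \<longleftrightarrow> (\<forall>p q. \<nu> (p + q) = \<nu> p + \<nu> q) \<and> (\<forall>c p. \<nu> (smult c p) = c * \<nu> p)"

(* G_nu(z) = sum_n <nu,x^n> z^{-(n+1)}, as a power series in w = 1/z *)
definition Gf :: "(complex poly \<Rightarrow> complex) \<Rightarrow> complex fps" where
  "Gf \<nu> = Abs_fps (\<lambda>n. if n = 0 then 0 else \<nu> (monom 1 (n - 1)))"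

(* K_nu is the compositional inverse of G_nu: K_nu(G_nu(z)) = z.  In the variable
   w = 1/z this says 1/K_nu(u) = fps_inv (Gf nu) (u), so K_nu is the Laurent series
   (in u) inverse (fps_inv (Gf nu)); R_nu = K_nu - 1/u. *)
definition Kf :: "(complex poly \<Rightarrow> complex) \<Rightarrow> complex fls" where
  "Kf \<nu> = inverse (fps_to_fls (fps_inv (Gf \<nu>)))"

definition Rtr :: "(complex poly \<Rightarrow> complex) \<Rightarrow> complex fls" where
  "Rtr \<nu> = Kf \<nu> - fls_X_inv"

definition mom_fun :: "real measure \<Rightarrow> complex poly \<Rightarrow> complex" where
  "mom_fun N = (\<lambda>p. \<integral>x. poly p (complex_of_real x) \<partial>N)"

(* F_{s,t} = K_s o G_t.  We represent it through the power series (in w = 1/z)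
   of 1/F_{s,t}(z) = (1/K_s)(G_t(z)) = fps_inv (G_s) o G_t. *)
definition Finv :: "(complex poly \<Rightarrow> complex) \<Rightarrow> (complex poly \<Rightarrow> complex) \<Rightarrow> complex fps" where
  "Finv \<mu>s \<mu>t = fps_compose (fps_inv (Gf \<mu>s)) (Gf \<mu>t)"

(* G_nu(F(z)) = sum_n <nu,x^n> F(z)^{-(n+1)} = (Gf nu) o (1/F) *)
definition G_after :: "(complex poly \<Rightarrow> complex) \<Rightarrow> complex fps \<Rightarrow> complex fps" where
  "G_after \<nu> \<phi> = fps_compose (Gf \<nu>) \<phi>"

(* The operator K determined coefficientwise by K(1/(z-x)) = 1/(F(z)-x), where
   phi = 1/F(z) as a series in w:
     sum_k K(x^k) w^(k+1) = sum_n x^n phi^(n+1),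
   so K(x^k) = sum_n [w^(k+1)] phi^(n+1) x^n; since phi = O(w), only n <= k
   contribute. *)
definition Kop :: "complex fps \<Rightarrow> complex poly \<Rightarrow> complex poly" where
  "Kop \<phi> p = (\<Sum>k\<le>degree p. smult (coeff p k)
                  (\<Sum>n\<le>k. monom (fps_nth (\<phi> ^ Suc n) (Suc k)) n))"

definition Kadj :: "complex fps \<Rightarrow> (complex poly \<Rightarrow> complex) \<Rightarrow> (complex poly \<Rightarrow> complex)" where
  "Kadj \<phi> \<nu> = (\<lambda>p. \<nu> (Kop \<phi> p))"

end

theory Submission
  imports Defs
begin

(* Pairing the defining identity  K(1/(z - x)) = 1/(F(z) - x)  with a linear functional nu
   turns G_nu(z) into G_nu(F(z)); coefficientwise in w = 1/z this is a finite identity.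
   For a martingale family P_k, the linear functionals K^* P_n^*(s) and P_n^*(t) agree on
   the basis P_k(., t) (both give delta_nk), hence coincide. When s = t the martingale
   property is not available, but then F is the identity because G_s(z) = 1/z + O(1/z^2). *)

lemma lin_fun_zero: "lin_fun \<nu> \<Longrightarrow> \<nu> 0 = 0"
  unfolding lin_fun_def by (metis add_cancel_right_right)

lemma lin_fun_sum: "lin_fun \<nu> \<Longrightarrow> \<nu> (\<Sum>i\<in>A. f i) = (\<Sum>i\<in>A. \<nu> (f i))"
  by (induction A rule: infinite_finite_induct) (auto simp: lin_fun_zero lin_fun_def)

lemma lin_fun_monom: "lin_fun \<nu> \<Longrightarrow> \<nu> (monom c k) = c * \<nu> (monom 1 k)"
  unfolding lin_fun_def by (metis mult.right_neutral smult_monom)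

lemma lin_fun_diff:
  assumes "lin_fun \<mu>" "lin_fun \<nu>"
  shows "lin_fun (\<lambda>p. \<mu> p - \<nu> p)"
  using assms unfolding lin_fun_def by (simp add: algebra_simps)

lemma lin_fun_eq_zero_if_degree_basis:
  assumes lin: "lin_fun \<nu>"
    and deg: "\<And>k. degree (P k) = k" and nz: "\<And>k. P k \<noteq> 0"
    and vanish: "\<And>k. \<nu> (P k) = 0"
  shows "\<nu> p = 0"
proof (induction "degree p" arbitrary: p rule: less_induct)
  case less
  define d where "d = degree p"
  define c where "c = coeff p d / lead_coeff (P d)"
  define q where "q = p - smult c (P d)"
  have "coeff (P d) d \<noteq> 0"
    using nz[of d] deg[of d] leading_coeff_0_iff by metis
  then have "coeff q d = 0"
    using deg[of d] by (simp add: q_def c_def)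
  then have "degree q \<noteq> d \<or> q = 0"
    by auto
  moreover have "degree q \<le> d"
    unfolding q_def by (rule degree_diff_le) (simp_all add: d_def deg)
  ultimately have "\<nu> q = 0"
    using less[of q] lin_fun_zero[OF lin] unfolding d_def by fastforce
  have "\<nu> p = \<nu> (q + smult c (P d))"
    by (simp add: q_def)
  also have "\<dots> = \<nu> q + c * \<nu> (P d)"
    using lin by (simp add: lin_fun_def)
  finally show "\<nu> p = 0"
    using \<open>\<nu> q = 0\<close> vanish by simp
qed

lemma lin_fun_eq_if_degree_basis:
  assumes "lin_fun \<mu>" "lin_fun \<nu>"
    and "\<And>k. degree (P k) = k" "\<And>k. P k \<noteq> 0"
    and "\<And>k. \<mu> (P k) = \<nu> (P k)"
  shows "\<mu> = \<nu>"
proof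
  fix p
  have "\<mu> p - \<nu> p = 0"
    by (rule lin_fun_eq_zero_if_degree_basis[OF lin_fun_diff]) (use assms in auto)
  then show "\<mu> p = \<nu> p"
    by simp
qed

lemma Kop_eq_sum_upto:
  assumes "degree p \<le> N"
  shows "Kop \<phi> p = (\<Sum>k\<le>N. smult (coeff p k)
                      (\<Sum>n\<le>k. monom (fps_nth (\<phi> ^ Suc n) (Suc k)) n))"
  unfolding Kop_def
  by (rule sum.mono_neutral_left) (use assms in \<open>auto simp: coeff_eq_0\<close>)

lemma Kop_add: "Kop \<phi> (p + q) = Kop \<phi> p + Kop \<phi> q"
proof -
  define N where "N = max (degree p) (degree q)"
  have "degree (p + q) \<le> N" "degree p \<le> N" "degree q \<le> N"
    unfolding N_def by (auto intro: degree_add_le)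
  then show ?thesis
    by (simp only: Kop_eq_sum_upto coeff_add smult_add_left sum.distrib)
qed

lemma smult_sum_right: "smult c (\<Sum>i\<in>A. f i) = (\<Sum>i\<in>A. smult c (f i))"
  by (induction A rule: infinite_finite_induct) (simp_all add: smult_add_right)

lemma Kop_smult: "Kop \<phi> (smult c p) = smult c (Kop \<phi> p)"
  by (simp add: Kop_eq_sum_upto[of "smult c p" "degree p"] Kop_def smult_sum_right)

lemma Kop_monom:
  "Kop \<phi> (monom 1 k) = (\<Sum>n\<le>k. monom (fps_nth (\<phi> ^ Suc n) (Suc k)) n)"
proof -
  have "Kop \<phi> (monom 1 k) = (\<Sum>j\<le>k. smult (coeff (monom 1 k) j)
                              (\<Sum>n\<le>j. monom (fps_nth (\<phi> ^ Suc n) (Suc j)) n))"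
    by (rule Kop_eq_sum_upto) (simp add: degree_monom_eq)
  also have "\<dots> = (\<Sum>n\<le>k. monom (fps_nth (\<phi> ^ Suc n) (Suc k)) n)"
    by (simp add: if_distrib[of "\<lambda>c. smult c _"] eq_commute[of k] cong: if_cong)
  finally show ?thesis .
qed

lemma lin_fun_Kadj: "lin_fun \<nu> \<Longrightarrow> lin_fun (Kadj \<phi> \<nu>)"
  unfolding lin_fun_def Kadj_def by (simp add: Kop_add Kop_smult)

lemma Gf_Kadj:
  assumes "lin_fun \<nu>"
  shows "Gf (Kadj \<phi> \<nu>) = G_after \<nu> \<phi>"
proof (rule fps_ext)
  fix m
  show "fps_nth (Gf (Kadj \<phi> \<nu>)) m = fps_nth (G_after \<nu> \<phi>) m"
  proof (cases m)
    case 0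
    then show ?thesis
      by (simp add: Gf_def G_after_def fps_compose_nth)
  next
    case (Suc k)
    have "fps_nth (Gf (Kadj \<phi> \<nu>)) m
            = (\<Sum>n\<le>k. \<nu> (monom (fps_nth (\<phi> ^ Suc n) (Suc k)) n))"
      using assms by (simp add: Suc Gf_def Kadj_def Kop_monom lin_fun_sum)
    also have "\<dots> = (\<Sum>n\<le>k. fps_nth (\<phi> ^ Suc n) (Suc k) * \<nu> (monom 1 n))"
      using assms by (intro sum.cong refl lin_fun_monom)
    also have "\<dots> = fps_nth (G_after \<nu> \<phi>) m"
      unfolding G_after_def fps_compose_nth Suc sum.atLeast0_atMost_Suc_shift
      by (simp add: Gf_def atLeast0AtMost mult.commute)
    finally show ?thesis .
  qed
qed

lemma Finv_self:
  assumes "\<mu> 1 \<noteq> 0"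
  shows "Finv \<mu> \<mu> = fps_X"
  unfolding Finv_def by (rule fps_inv) (use assms in \<open>simp_all add: Gf_def\<close>)

lemma mom_fun_one: "prob_space N \<Longrightarrow> mom_fun N 1 = 1"
  by (simp add: mom_fun_def prob_space.prob_space)

theorem lemma4p10:
  fixes M :: "real \<Rightarrow> real measure" and s t :: real
  assumes meas: "\<And>r. r \<ge> 0 \<Longrightarrow> prob_space (M r) \<and> sets (M r) = sets borel
                      \<and> (\<forall>n::nat. integrable (M r) (\<lambda>x. x ^ n))"
    and semigroup: "\<And>r. r \<ge> 0 \<Longrightarrow>
            Rtr (mom_fun (M r)) = fls_const (complex_of_real r) * Rtr (mom_fun (M 1))"
    and st: "0 \<le> s" "s \<le> t"
  shows "(\<forall>\<nu>. lin_fun \<nu> \<longrightarrow>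
            Gf (Kadj (Finv (mom_fun (M s)) (mom_fun (M t))) \<nu>)
              = G_after \<nu> (Finv (mom_fun (M s)) (mom_fun (M t))))
       \<and> (\<forall>(P :: nat \<Rightarrow> real \<Rightarrow> complex poly) (Pstar :: nat \<Rightarrow> real \<Rightarrow> complex poly \<Rightarrow> complex).
            (\<forall>n r. r \<ge> 0 \<longrightarrow> degree (P n r) = n)
          \<and> (\<forall>n r r'. 0 \<le> r \<and> r < r' \<longrightarrow>
                Kop (Finv (mom_fun (M r)) (mom_fun (M r'))) (P n r') = P n r)
          \<and> (\<forall>n r. r \<ge> 0 \<longrightarrow> lin_fun (Pstar n r)
                \<and> (\<forall>k. Pstar n r (P k r) = (if n = k then 1 else 0)))
          \<longrightarrow> (\<forall>n. Gf (Pstar n t)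
                   = G_after (Pstar n s) (Finv (mom_fun (M s)) (mom_fun (M t)))))"
proof (intro conjI allI impI)
  let ?\<phi> = "Finv (mom_fun (M s)) (mom_fun (M t))"
  show "Gf (Kadj ?\<phi> \<nu>) = G_after \<nu> ?\<phi>" if "lin_fun \<nu>" for \<nu>
    using that by (rule Gf_Kadj)
  fix P :: "nat \<Rightarrow> real \<Rightarrow> complex poly" and Pstar n
  assume "(\<forall>n r. r \<ge> 0 \<longrightarrow> degree (P n r) = n)
          \<and> (\<forall>n r r'. 0 \<le> r \<and> r < r' \<longrightarrow>
                Kop (Finv (mom_fun (M r)) (mom_fun (M r'))) (P n r') = P n r)
          \<and> (\<forall>n r. r \<ge> 0 \<longrightarrow> lin_fun (Pstar n r)
                \<and> (\<forall>k. Pstar n r (P k r) = (if n = k then 1 else 0)))"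
  then have deg: "\<And>k. degree (P k t) = k"
    and mart: "\<And>k. s < t \<Longrightarrow> Kop ?\<phi> (P k t) = P k s"
    and lin: "\<And>m r. 0 \<le> r \<Longrightarrow> lin_fun (Pstar m r)"
    and dual: "\<And>m k r. 0 \<le> r \<Longrightarrow> Pstar m r (P k r) = (if m = k then 1 else 0)"
    using st by auto
  have lin_s: "lin_fun (Pstar n s)" and lin_t: "\<And>m. lin_fun (Pstar m t)"
    using lin st by auto
  show "Gf (Pstar n t) = G_after (Pstar n s) ?\<phi>"
  proof (cases "s = t")
    case True
    then show ?thesis
      using Finv_self mom_fun_one meas st by (simp add: G_after_def)
  next
    case False
    have "P k t \<noteq> 0" for k
      using dual[of t k k] lin_fun_zero[OF lin_t] st by force
    then have "Kadj ?\<phi> (Pstar n s) = Pstar n t"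
      using lin_fun_Kadj[OF lin_s] lin_t deg mart dual st False
      by (intro lin_fun_eq_if_degree_basis[where P = "\<lambda>k. P k t"]) (auto simp: Kadj_def)
    then show ?thesis
      using Gf_Kadj[OF lin_s, of ?\<phi>] by simp
  qed
qed

end
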